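(* Let $m\ge 3$ be an integer. (1) Let $G\in\mathcal{H}_m$ and let $G_0,G_1,\dots,G_t,G$ be an $m$-decomposition of $G$ such that either $t=1$ and $G_t\neq G$, or $t\ge 2$. Then there exist positive integers $a,b$ with $b\le m$ such that $\rho^{\max}(G)=1+\frac{1}{m-1+b/a}$. (2) Let $\rho\in\left(1,\frac{m}{m-1}\right)$. Then there exists $\eta\in\mathbb{N}$ such that for every integer $v>\eta$, every graph $G\in\mathcal{H}_m$ with $v$ vertices has a subgraph with at most $\eta$ vertices whose density exceeds $\rho$.
   Context: All graphs are finite, simple, undirected. For a graph $G$, $v(G)$ and $e(G)$ are its numbers of vertices and edges, $\rho(G)=e(G)/v(G)$ its density, and $\rho^{\max}(G)=\max\{\rho(H):H\subseteq G\}$ (over all subgraphs). Let $H\subset G$ and $m$ a positive integer. $G$ is an $m$-extension of $H$ of the first type if $m\ge3$, $\rho^{\max}(G)<\frac{m}{m-1}$, and there is a vertex $x_1\in V(H)$ and integers $t_1\ge0$, $t_2\ge2$ with $t_1+t_2\le m-1$ such that $V(G)\setminus V(H)=\{y^1_1,\dots,y^1_{t_1},y^2_1,\dots,y^2_{t_2}\}$ and $E(G)\setminus E(H)=\{\{x_1,y^1_1\},\{y^1_1,y^1_2\},\dots,\{y^1_{t_1-1},y^1_{t_1}\},\{y^1_{t_1},y^2_1\},\{y^2_1,y^2_2\},\dots,\{y^2_{t_2-1},y^2_{t_2}\},\{y^2_{t_2},y^1_1\}\}$ (i.e. a path from $x_1$ followed by a cycle; when $t_1=0$, $x_1$ itself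 plays the role of $y^1_1$, being adjacent to $y^2_1$ and $y^2_{t_2}$). $G$ is an $m$-extension of $H$ of the second type if $m\ge2$, $\rho^{\max}(G)<\frac{m}{m-1}$, and there are distinct vertices $x_1,x_2\in V(H)$ and new vertices $y_1,\dots,y_t$ with $1\le t\le m-1$ such that $G=(V(H)\sqcup\{y_1,\dots,y_t\},\,E(H)\sqcup\{\{x_1,y_1\},\{y_1,y_2\},\dots,\{y_{t-1},y_t\},\{y_t,x_2\}\})$. $G$ is an $m$-extension of $H$ of the third type if $m\ge2$, $V(H)=V(G)$, $E(H)\subset E(G)$ and $\rho^{\max}(G)<\frac{m}{m-1}$. For $m\ge3$, $\mathcal{H}_m$ is the smallest class of graphs (up to isomorphism) containing the one-vertex graph with no edges and closed under taking $m$-extensions of the first, second and third types. An $m$-decomposition of $G\in\mathcal{H}_m$ is a sequence of graphs $G_0\subset G_1\subset\dots\subset G_t\subseteq G$, where $G_0$ is a one-vertex edgeless graph, $G_i\ne G_{i+1}$ for all $i$, each $G_i$ ($1\le i\le t$) is an $m$-extension of the first or second type of $G_{i-1}$, and $G$ either equals $G_t$ or is an $m$-extension of the third type of $G_t$. *)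

theory Defs
  imports Complex_Main
begin

text \<open>Finite simple graphs with vertices drawn from nat (H_m is taken up to isomorphism,
  and every finite graph is isomorphic to one on nat).  A graph is a pair (V, E).\<close>

type_synonym graph = "nat set \<times> nat set set"

definition verts :: "graph \<Rightarrow> nat set" where "verts G = fst G"
definition edges :: "graph \<Rightarrow> nat set set" where "edges G = snd G"

definition is_graph :: "graph \<Rightarrow> bool" where
  "is_graph G \<longleftrightarrow> finite (verts G) \<and>
     edges G \<subseteq> {{u, v} | u v. u \<in> verts G \<and> v \<in> verts G \<and> u \<noteq> v}"

definition subgraph :: "graph \<Rightarrow> graph \<Rightarrow> bool" where
  "subgraph H G \<longleftrightarrow> is_graph H \<and> verts H \<subseteq> verts G \<and> edges H \<subseteq> edges G"

definition density :: "graph \<Rightarrow> real" where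
  "density G = real (card (edges G)) / real (card (verts G))"

definition rho_max :: "graph \<Rightarrow> real" where
  "rho_max G = Max (density ` {H. subgraph H G})"

definition path_edges :: "nat list \<Rightarrow> nat set set" where
  "path_edges xs = set (map (\<lambda>(a, b). {a, b}) (zip xs (tl xs)))"

definition one_vertex_graph :: "graph \<Rightarrow> bool" where
  "one_vertex_graph G \<longleftrightarrow> (\<exists>x. G = ({x}, {}))"

text \<open>First type: new vertices ys1 = y^1_1..y^1_{t1}, ys2 = y^2_1..y^2_{t2}; new edges are the
  path x1, y^1_1, .., y^1_{t1}, y^2_1, .., y^2_{t2} plus the edge from y^2_{t2} back to y^1_1
  (to x1 if t1 = 0).\<close>
definition ext1 :: "nat \<Rightarrow> graph \<Rightarrow> graph \<Rightarrow> bool" where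
  "ext1 m H G \<longleftrightarrow> m \<ge> 3 \<and> rho_max G < real m / real (m - 1) \<and>
    (\<exists>x1 ys1 ys2. x1 \<in> verts H \<and> length ys2 \<ge> 2 \<and> length ys1 + length ys2 \<le> m - 1 \<and>
       distinct (ys1 @ ys2) \<and> set (ys1 @ ys2) \<inter> verts H = {} \<and>
       G = (verts H \<union> set (ys1 @ ys2),
            edges H \<union> path_edges (x1 # ys1 @ ys2) \<union> {{last ys2, hd (ys1 @ [x1])}}))"

definition ext2 :: "nat \<Rightarrow> graph \<Rightarrow> graph \<Rightarrow> bool" where
  "ext2 m H G \<longleftrightarrow> m \<ge> 2 \<and> rho_max G < real m / real (m - 1) \<and>
    (\<exists>x1 x2 ys. x1 \<in> verts H \<and> x2 \<in> verts H \<and> x1 \<noteq> x2 \<and>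
       1 \<le> length ys \<and> length ys \<le> m - 1 \<and>
       distinct ys \<and> set ys \<inter> verts H = {} \<and>
       G = (verts H \<union> set ys, edges H \<union> path_edges (x1 # ys @ [x2])))"

definition ext3 :: "nat \<Rightarrow> graph \<Rightarrow> graph \<Rightarrow> bool" where
  "ext3 m H G \<longleftrightarrow> m \<ge> 2 \<and> is_graph G \<and> verts H = verts G \<and> edges H \<subset> edges G \<and>
    rho_max G < real m / real (m - 1)"

definition graph_iso :: "graph \<Rightarrow> graph \<Rightarrow> bool" where
  "graph_iso H G \<longleftrightarrow> (\<exists>f. bij_betw f (verts H) (verts G) \<and> edges G = (\<lambda>e. f ` e) ` edges H)"

inductive Hm :: "nat \<Rightarrow> graph \<Rightarrow> bool" for m where
  base: "Hm m ({x}, {})"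
| first: "Hm m H \<Longrightarrow> ext1 m H G \<Longrightarrow> Hm m G"
| second: "Hm m H \<Longrightarrow> ext2 m H G \<Longrightarrow> Hm m G"
| third: "Hm m H \<Longrightarrow> ext3 m H G \<Longrightarrow> Hm m G"
| iso: "Hm m H \<Longrightarrow> graph_iso H G \<Longrightarrow> Hm m G"

definition m_decomposition :: "nat \<Rightarrow> (nat \<Rightarrow> graph) \<Rightarrow> nat \<Rightarrow> graph \<Rightarrow> bool" where
  "m_decomposition m Gs t G \<longleftrightarrow> one_vertex_graph (Gs 0) \<and>
    (\<forall>i<t. Gs i \<noteq> Gs (Suc i) \<and> (ext1 m (Gs i) (Gs (Suc i)) \<or> ext2 m (Gs i) (Gs (Suc i)))) \<and>
    (G = Gs t \<or> ext3 m (Gs t) G)"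

end

theory Submission
  imports Defs
begin

text \<open>An extension of the first or second type adds n \<le> m - 1 new vertices and n + 1 new
  edges, and one of the third type adds edges only. So a graph built from one vertex by k such
  steps has v \<le> 1 + k(m - 1) and e \<ge> v + k - 1, and for every j \<le> k it has a subgraph
  satisfying these bounds with j in place of k. For (1), k \<ge> 2 gives e > v and
  m v - (m - 1) e \<le> m; both inequalities pass to a densest subgraph F, and
  a = e(F) - v(F), b = m v(F) - (m - 1) e(F) write rho_max = e(F)/v(F) in the required form,
  with b > 0 because rho_max < m/(m - 1). For (2), fix k so large that (v + k - 1)/v > \<rho>
  whenever v \<le> 1 + k(m - 1); every large member of H_m has a subgraph with the bounds for
  this k.\<close>

lemma path_edges_Nil [simp]: "path_edges [] = {}"
  by (simp add: path_edges_def)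

lemma path_edges_singleton [simp]: "path_edges [a] = {}"
  by (simp add: path_edges_def)

lemma path_edges_Cons_Cons [simp]: "path_edges (a # b # xs) = insert {a, b} (path_edges (b # xs))"
  by (simp add: path_edges_def)

lemma finite_path_edges [simp]: "finite (path_edges xs)"
  by (simp add: path_edges_def)

lemma path_edges_snoc: "xs \<noteq> [] \<Longrightarrow> path_edges (xs @ [z]) = insert {last xs, z} (path_edges xs)"
  by (induction xs rule: induct_list012) auto

lemma path_edges_subset: "e \<in> path_edges xs \<Longrightarrow> e \<subseteq> set xs"
  by (induction xs rule: induct_list012) auto

lemma path_edges_proper:
  "distinct xs \<Longrightarrow> e \<in> path_edges xs \<Longrightarrow> \<exists>u v. e = {u, v} \<and> u \<in> set xs \<and> v \<in> set xs \<and> u \<noteq> v"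
  by (induction xs rule: induct_list012) auto

lemma path_edges_meets_tl: "e \<in> path_edges xs \<Longrightarrow> e \<inter> set (tl xs) \<noteq> {}"
  by (induction xs rule: induct_list012) auto

lemma path_edges_meets_inner: "ys \<noteq> [] \<Longrightarrow> e \<in> path_edges (x # ys @ [z]) \<Longrightarrow> e \<inter> set ys \<noteq> {}"
proof (induction ys arbitrary: x)
  case (Cons y ys)
  then show ?case by (cases ys) auto
qed simp

lemma card_path_edges: "distinct xs \<Longrightarrow> card (path_edges xs) = length xs - 1"
proof (induction xs rule: induct_list012)
  case (3 a b xs)
  have "{a, b} \<notin> path_edges (b # xs)"
    using path_edges_subset "3.prems" by fastforce
  with 3 show ?case by simp
qed auto

lemma path_edges_snoc_neighbour:
  assumes "distinct (xs @ [z])" "{z, h} \<in> path_edges (xs @ [z])"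
  shows "xs \<noteq> [] \<and> h = last xs"
proof -
  have "xs \<noteq> []" using assms(2) by auto
  moreover have "{z, h} \<notin> path_edges xs"
    using path_edges_subset assms(1) by fastforce
  ultimately show ?thesis
    using assms(2) path_edges_snoc by (auto simp: doubleton_eq_iff)
qed

lemma is_graph_edge_subset: "is_graph G \<Longrightarrow> e \<in> edges G \<Longrightarrow> e \<subseteq> verts G"
  by (auto simp: is_graph_def)

lemma is_graph_finite_edges: "is_graph G \<Longrightarrow> finite (edges G)"
  by (meson PowI finite_Pow_iff finite_subset is_graph_def is_graph_edge_subset subsetI)

text \<open>With n = 0 this also covers extensions of the third type.\<close>
definition grows_by_step :: "nat \<Rightarrow> graph \<Rightarrow> graph \<Rightarrow> bool" where
  "grows_by_step m H G \<longleftrightarrow> is_graph G \<and> verts H \<subseteq> verts G \<and> edges H \<subseteq> edges G \<and>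
     (\<exists>n \<le> m - 1. card (verts G) = card (verts H) + n \<and> card (edges H) + n + 1 \<le> card (edges G))"

lemma grows_by_step_extend:
  assumes H: "is_graph H" and Y: "finite Y" "Y \<inter> verts H = {}" "card Y \<le> m - 1"
    and N: "finite N" "card Y < card N"
    and proper: "N \<subseteq> {{u, v} | u v. u \<in> verts H \<union> Y \<and> v \<in> verts H \<union> Y \<and> u \<noteq> v}"
    and new: "\<forall>e\<in>N. e \<inter> Y \<noteq> {}"
  shows "grows_by_step m H (verts H \<union> Y, edges H \<union> N)"
proof -
  have "edges H \<inter> N = {}"
    using new is_graph_edge_subset[OF H] Y(2) by blast
  then have "card (edges H \<union> N) = card (edges H) + card N"
    using is_graph_finite_edges[OF H] N(1) by (simp add: card_Un_disjoint)
  moreover have "card (verts H \<union> Y) = card (verts H) + card Y"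
    using H Y by (simp add: is_graph_def card_Un_disjoint Int_commute)
  moreover have "is_graph (verts H \<union> Y, edges H \<union> N)"
    using H Y(1) proper unfolding is_graph_def verts_def edges_def by fastforce
  ultimately show ?thesis
    using Y(3) N(2) unfolding grows_by_step_def by (auto simp: verts_def edges_def)
qed

lemma ext1_grows_by_step:
  assumes "ext1 m H G" "is_graph H"
  shows "grows_by_step m H G"
proof -
  from assms(1) obtain x1 ys1 ys2 where x1: "x1 \<in> verts H" and ys2: "length ys2 \<ge> 2"
    and len: "length ys1 + length ys2 \<le> m - 1" and dist: "distinct (ys1 @ ys2)"
    and new: "set (ys1 @ ys2) \<inter> verts H = {}"
    and G: "G = (verts H \<union> set (ys1 @ ys2),
                 edges H \<union> (path_edges (x1 # ys1 @ ys2) \<union> {{last ys2, hd (ys1 @ [x1])}}))"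
    unfolding ext1_def by (auto simp: Un_assoc)
  define l where "l = last ys2"
  define h where "h = hd (ys1 @ [x1])"
  define L where "L = x1 # ys1 @ butlast ys2"
  define Y where "Y = set (ys1 @ ys2)"
  have ys2_split: "ys2 = butlast ys2 @ [l]" and "butlast ys2 \<noteq> []"
    using ys2 by (auto simp: l_def simp flip: length_greater_0_conv)
  have path: "x1 # ys1 @ ys2 = L @ [l]"
    using ys2_split by (simp add: L_def)
  have distL: "distinct (L @ [l])"
    using dist x1 new by (simp flip: path) auto
  have l: "l \<in> set ys2"
    using ys2 by (simp add: l_def flip: length_greater_0_conv)
  have h: "h \<in> insert x1 (set ys1)"
    by (cases ys1) (auto simp: h_def)
  have "h \<noteq> l"
    using h l dist x1 new by auto
  have "last L \<in> set ys2"
    using \<open>butlast ys2 \<noteq> []\<close> by (simp add: L_def in_set_butlastD)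
  then have "h \<noteq> last L"
    using h dist x1 new by auto
  \<comment> \<open>the only path neighbour of l lies in ys2, as t2 \<ge> 2\<close>
  then have closing_new: "{l, h} \<notin> path_edges (L @ [l])"
    using path_edges_snoc_neighbour[OF distL] by blast
  show ?thesis
    unfolding G l_def[symmetric] h_def[symmetric] path Y_def[symmetric]
  proof (rule grows_by_step_extend[OF assms(2)])
    show "finite Y" "Y \<inter> verts H = {}"
      using new by (simp_all add: Y_def)
    have "card Y = length (ys1 @ ys2)"
      using distinct_card[OF dist] by (simp only: Y_def)
    then show "card Y \<le> m - 1" "card Y < card (path_edges (L @ [l]) \<union> {{l, h}})"
      using len closing_new card_path_edges[OF distL] by (simp_all flip: path)
    show "\<forall>e\<in>path_edges (L @ [l]) \<union> {{l, h}}. e \<inter> Y \<noteq> {}"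
      using path_edges_meets_tl[of _ "L @ [l]"] l by (auto simp: Y_def simp flip: path)
    have "set (L @ [l]) \<subseteq> verts H \<union> Y" "l \<in> Y" "h \<in> verts H \<union> Y"
      using x1 l h by (auto simp: Y_def simp flip: path)
    then show "path_edges (L @ [l]) \<union> {{l, h}} \<subseteq>
        {{u, v} | u v. u \<in> verts H \<union> Y \<and> v \<in> verts H \<union> Y \<and> u \<noteq> v}"
      using path_edges_proper[OF distL] \<open>h \<noteq> l\<close> by blast
  qed simp
qed

lemma ext2_grows_by_step:
  assumes "ext2 m H G" "is_graph H"
  shows "grows_by_step m H G"
proof -
  from assms(1) obtain x1 x2 ys where x: "x1 \<in> verts H" "x2 \<in> verts H" "x1 \<noteq> x2"
    and ys: "1 \<le> length ys" "length ys \<le> m - 1" "distinct ys" "set ys \<inter> verts H = {}"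
    and G: "G = (verts H \<union> set ys, edges H \<union> path_edges (x1 # ys @ [x2]))"
    unfolding ext2_def by blast
  have "ys \<noteq> []"
    using ys(1) by auto
  have dist: "distinct (x1 # ys @ [x2])"
    using x ys by auto
  show ?thesis
    unfolding G
  proof (rule grows_by_step_extend[OF assms(2)])
    show "card (set ys) \<le> m - 1" "card (set ys) < card (path_edges (x1 # ys @ [x2]))"
      using ys card_path_edges[OF dist] by (simp_all add: distinct_card)
    show "\<forall>e\<in>path_edges (x1 # ys @ [x2]). e \<inter> set ys \<noteq> {}"
      using path_edges_meets_inner[OF \<open>ys \<noteq> []\<close>] by blast
    have "set (x1 # ys @ [x2]) \<subseteq> verts H \<union> set ys"
      using x by auto
    then show "path_edges (x1 # ys @ [x2]) \<subseteq>
        {{u, v} | u v. u \<in> verts H \<union> set ys \<and> v \<in> verts H \<union> set ys \<and> u \<noteq> v}"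
      using path_edges_proper[OF dist] by blast
  qed (use ys in simp_all)
qed

lemma ext3_grows_by_step:
  assumes "ext3 m H G" "is_graph H"
  shows "grows_by_step m H G"
proof -
  have "card (edges H) < card (edges G)"
    using assms(1) is_graph_finite_edges psubset_card_mono unfolding ext3_def by blast
  then show ?thesis
    using assms(1) unfolding ext3_def grows_by_step_def by force
qed

text \<open>The counts of a graph grown from a single vertex by k steps of \<open>grows_by_step\<close>.\<close>
definition step_bounds :: "nat \<Rightarrow> nat \<Rightarrow> graph \<Rightarrow> bool" where
  "step_bounds m k G \<longleftrightarrow>
     card (verts G) \<le> 1 + k * (m - 1) \<and> card (verts G) + k \<le> card (edges G) + 1"

lemma step_bounds_single_vertex: "step_bounds m 0 ({x}, {})"
  by (simp add: step_bounds_def verts_def edges_def)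

lemma step_bounds_grows_by_step:
  "grows_by_step m H G \<Longrightarrow> step_bounds m k H \<Longrightarrow> step_bounds m (Suc k) G"
  unfolding grows_by_step_def step_bounds_def by auto

lemma step_bounds_excess:
  assumes "step_bounds m k G" "2 \<le> k" "1 \<le> m"
  shows "card (verts G) < card (edges G)" "m * card (verts G) \<le> (m - 1) * card (edges G) + m"
proof -
  define v e where "v = card (verts G)" and "e = card (edges G)"
  have v: "v \<le> 1 + k * (m - 1)" and e: "v + k \<le> e + 1"
    using assms(1) by (simp_all add: step_bounds_def v_def e_def)
  then show "card (verts G) < card (edges G)"
    using assms(2) by (simp add: v_def e_def)
  have "m * v \<le> (m - 1) * v + v"
    by (cases m) simp_all
  also have "\<dots> \<le> (m - 1) * v + (m - 1) * k + 1"
    using v by (simp add: mult.commute)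
  also have "\<dots> = (m - 1) * (v + k) + 1"
    by (simp add: add_mult_distrib2)
  also have "\<dots> \<le> (m - 1) * (e + 1) + 1"
    using e by (intro add_right_mono mult_left_mono) simp_all
  also have "\<dots> = (m - 1) * e + m"
    using assms(3) by (cases m) simp_all
  finally show "m * card (verts G) \<le> (m - 1) * card (edges G) + m"
    by (simp add: v_def e_def)
qed

lemma subgraph_refl: "is_graph G \<Longrightarrow> subgraph G G"
  by (simp add: subgraph_def)

lemma subgraph_mono: "subgraph K H \<Longrightarrow> verts H \<subseteq> verts G \<Longrightarrow> edges H \<subseteq> edges G \<Longrightarrow> subgraph K G"
  by (auto simp: subgraph_def)

definition map_graph :: "(nat \<Rightarrow> nat) \<Rightarrow> graph \<Rightarrow> graph" where
  "map_graph f K = (f ` verts K, (`) f ` edges K)"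

lemma subgraph_map_graph:
  assumes f: "bij_betw f (verts H) (verts G)" and G: "edges G = (`) f ` edges H"
    and K: "subgraph K H"
  shows "subgraph (map_graph f K) G"
    and "card (verts (map_graph f K)) = card (verts K)"
    and "card (edges (map_graph f K)) = card (edges K)"
proof -
  have KH: "verts K \<subseteq> verts H" "edges K \<subseteq> edges H" and gK: "is_graph K"
    using K by (auto simp: subgraph_def)
  have inj: "inj_on f (verts K)"
    using f KH(1) by (auto simp: bij_betw_def intro: inj_on_subset)
  have "inj_on ((`) f) (edges K)"
    using inj is_graph_edge_subset[OF gK] by (auto intro!: inj_onI simp: inj_on_image_eq_iff)
  then show "card (edges (map_graph f K)) = card (edges K)"
    by (simp add: map_graph_def edges_def card_image)
  show "card (verts (map_graph f K)) = card (verts K)"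
    using inj by (simp add: map_graph_def verts_def card_image)
  have "is_graph (map_graph f K)"
    unfolding is_graph_def
  proof
    show "finite (verts (map_graph f K))"
      using gK by (simp add: is_graph_def map_graph_def verts_def)
    show "edges (map_graph f K) \<subseteq>
        {{u, v} | u v. u \<in> verts (map_graph f K) \<and> v \<in> verts (map_graph f K) \<and> u \<noteq> v}"
    proof
      fix e' assume "e' \<in> edges (map_graph f K)"
      then obtain u v where "e' = {f u, f v}" "u \<in> verts K" "v \<in> verts K" "u \<noteq> v"
        using gK by (auto simp: map_graph_def edges_def is_graph_def)
      moreover have "f u \<noteq> f v"
        using inj \<open>u \<in> verts K\<close> \<open>v \<in> verts K\<close> \<open>u \<noteq> v\<close> by (simp add: inj_on_eq_iff)
      ultimately show "e' \<in> {{u, v} | u v. u \<in> verts (map_graph f K) \<and> v \<in> verts (map_graph f K) \<and> u \<noteq> v}"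
        by (auto simp: map_graph_def verts_def)
    qed
  qed
  moreover have "verts (map_graph f K) \<subseteq> verts G"
    using bij_betw_imp_surj_on[OF f] KH(1) by (auto simp: map_graph_def verts_def)
  moreover have "edges (map_graph f K) \<subseteq> edges G"
    using G KH(2) by (auto simp: map_graph_def edges_def)
  ultimately show "subgraph (map_graph f K) G"
    by (simp add: subgraph_def)
qed

definition has_step_subgraphs :: "nat \<Rightarrow> graph \<Rightarrow> bool" where
  "has_step_subgraphs m G \<longleftrightarrow> is_graph G \<and>
     (\<exists>s. step_bounds m s G \<and> (\<forall>k \<le> s. \<exists>H. subgraph H G \<and> step_bounds m k H))"

lemma has_step_subgraphs_grows_by_step:
  assumes H: "has_step_subgraphs m H" and step: "grows_by_step m H G"
  shows "has_step_subgraphs m G"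
proof -
  obtain s where s: "step_bounds m s H" "\<forall>k \<le> s. \<exists>K. subgraph K H \<and> step_bounds m k K"
    using H by (auto simp: has_step_subgraphs_def)
  have G: "is_graph G" "verts H \<subseteq> verts G" "edges H \<subseteq> edges G"
    using step by (simp_all add: grows_by_step_def)
  have "\<exists>K. subgraph K G \<and> step_bounds m k K" if "k \<le> Suc s" for k
  proof (cases "k = Suc s")
    case True
    then show ?thesis
      using subgraph_refl[OF G(1)] step_bounds_grows_by_step[OF step s(1)] by blast
  next
    case False
    then show ?thesis
      using that s(2) subgraph_mono G(2,3) by (meson le_Suc_eq)
  qed
  then show ?thesis
    using G(1) step_bounds_grows_by_step[OF step s(1)] by (auto simp: has_step_subgraphs_def)
qed

lemma has_step_subgraphs_iso:
  assumes H: "has_step_subgraphs m H" and iso: "graph_iso H G"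
  shows "has_step_subgraphs m G"
proof -
  obtain f where f: "bij_betw f (verts H) (verts G)" and G: "edges G = (`) f ` edges H"
    using iso by (auto simp: graph_iso_def)
  have step_bounds_map: "subgraph (map_graph f K) G \<and> step_bounds m k (map_graph f K)"
    if "subgraph K H" "step_bounds m k K" for K k
    using subgraph_map_graph[OF f G that(1)] that(2) by (simp add: step_bounds_def)
  have "map_graph f H = G"
    using f G by (simp add: map_graph_def bij_betw_def verts_def edges_def prod_eq_iff)
  moreover have "is_graph H"
    using H by (simp add: has_step_subgraphs_def)
  ultimately show ?thesis
    using H step_bounds_map[OF subgraph_refl] step_bounds_map
    unfolding has_step_subgraphs_def by (metis subgraph_def)
qed

lemma Hm_has_step_subgraphs: "Hm m G \<Longrightarrow> has_step_subgraphs m G"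
proof (induction rule: Hm.induct)
  case (base x)
  have "is_graph ({x}, {})"
    by (simp add: is_graph_def verts_def edges_def)
  then show ?case
    using subgraph_refl step_bounds_single_vertex unfolding has_step_subgraphs_def by blast
next
  case (first H G)
  then show ?case
    using ext1_grows_by_step has_step_subgraphs_grows_by_step has_step_subgraphs_def by blast
next
  case (second H G)
  then show ?case
    using ext2_grows_by_step has_step_subgraphs_grows_by_step has_step_subgraphs_def by blast
next
  case (third H G)
  then show ?case
    using ext3_grows_by_step has_step_subgraphs_grows_by_step has_step_subgraphs_def by blast
next
  case (iso H G)
  then show ?case
    using has_step_subgraphs_iso by blast
qed

lemma step_bounds_density_gt:
  fixes \<rho> :: real
  assumes H: "is_graph H" "step_bounds m k H"
    and \<rho>: "1 \<le> \<rho>" "\<rho> < real k * (1 - (\<rho> - 1) * real (m - 1))"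
  shows "\<rho> < density H"
proof -
  define V E where "V = real (card (verts H))" and "E = real (card (edges H))"
  have V: "V \<le> 1 + real k * real (m - 1)" and E: "V + real k \<le> E + 1"
    using H(2) unfolding step_bounds_def V_def E_def by (simp_all flip: of_nat_add of_nat_mult)
  have "real k > 1"
    using \<rho> by (smt (verit) mult_left_le mult_nonneg_nonneg of_nat_0_le_iff)
  have "V > 0"
  proof (rule ccontr)
    assume "\<not> V > 0"
    then have "verts H = {}"
      using H(1) by (simp add: V_def is_graph_def)
    then have "E = 0"
      using H(1) by (simp add: E_def is_graph_def)
    with E \<open>real k > 1\<close> \<open>\<not> V > 0\<close> show False
      by (simp add: V_def)
  qed
  have "\<rho> * V = V + (\<rho> - 1) * V"
    by (simp add: algebra_simps)
  also have "\<dots> \<le> V + (\<rho> - 1) * (1 + real k * real (m - 1))"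
    using V \<rho>(1) by (simp add: mult_left_mono)
  also have "\<dots> < V + real k - 1"
    using \<rho>(2) by (simp add: algebra_simps)
  also have "\<dots> \<le> E"
    using E by simp
  finally show ?thesis
    using \<open>V > 0\<close> by (simp add: density_def V_def E_def pos_less_divide_eq)
qed

lemma Hm_large_has_small_dense_subgraph:
  fixes \<rho> :: real
  assumes \<rho>: "1 \<le> \<rho>" "\<rho> < real m / (real m - 1)"
  shows "\<exists>\<eta> :: nat. \<forall>v > \<eta>. \<forall>G. Hm m G \<and> card (verts G) = v \<longrightarrow>
            (\<exists>H. subgraph H G \<and> card (verts H) \<le> \<eta> \<and> density H > \<rho>)"
proof -
  have "2 \<le> m"
  proof (rule ccontr)
    assume "\<not> 2 \<le> m"
    then have "m = 0 \<or> m = 1"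
      by auto
    then show False
      using \<rho> by auto
  qed
  then have "\<rho> * (real m - 1) < real m"
    using \<rho>(2) by (simp add: pos_less_divide_eq)
  then have c: "0 < 1 - (\<rho> - 1) * real (m - 1)"
    using \<open>2 \<le> m\<close> by (simp add: of_nat_diff algebra_simps)
  obtain k :: nat where "\<rho> / (1 - (\<rho> - 1) * real (m - 1)) < real k"
    using reals_Archimedean2 by blast
  then have k: "\<rho> < real k * (1 - (\<rho> - 1) * real (m - 1))"
    using c by (simp add: pos_divide_less_eq)
  have "\<exists>H. subgraph H G \<and> card (verts H) \<le> 1 + k * (m - 1) \<and> density H > \<rho>"
    if large: "1 + k * (m - 1) < card (verts G)" and G: "Hm m G" for G
  proof -
    obtain s where s: "step_bounds m s G" "\<forall>k \<le> s. \<exists>H. subgraph H G \<and> step_bounds m k H"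
      using Hm_has_step_subgraphs[OF G] by (auto simp: has_step_subgraphs_def)
    then have "k * (m - 1) < s * (m - 1)"
      using large unfolding step_bounds_def by linarith
    then obtain H where H: "subgraph H G" "step_bounds m k H"
      using s(2) by (meson less_imp_le_nat mult_less_cancel2)
    then have "density H > \<rho>"
      using step_bounds_density_gt[OF _ H(2) \<rho>(1) k] by (simp add: subgraph_def)
    then show ?thesis
      using H unfolding step_bounds_def by blast
  qed
  then show ?thesis
    by blast
qed

lemma finite_subgraphs: "is_graph G \<Longrightarrow> finite {H. subgraph H G}"
proof -
  assume G: "is_graph G"
  have "{H. subgraph H G} \<subseteq> Pow (verts G) \<times> Pow (edges G)"
    by (auto simp: subgraph_def verts_def edges_def)
  moreover have "finite (Pow (verts G) \<times> Pow (edges G))"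
    using G is_graph_finite_edges by (simp add: is_graph_def)
  ultimately show ?thesis
    by (rule finite_subset)
qed

lemma densest_subgraph_exists: "is_graph G \<Longrightarrow> \<exists>F. subgraph F G \<and> density F = rho_max G"
  unfolding rho_max_def
  using Max_in[of "density ` {H. subgraph H G}"] finite_subgraphs subgraph_refl by fastforce

lemma density_le_rho_max: "is_graph G \<Longrightarrow> subgraph H G \<Longrightarrow> density H \<le> rho_max G"
  unfolding rho_max_def using finite_subgraphs by simp

lemma density_eq_form:
  fixes V E m :: nat
  assumes "V < E" "(m - 1) * E < m * V" "m * V \<le> (m - 1) * E + m"
  shows "\<exists>a b :: nat. 0 < a \<and> 0 < b \<and> b \<le> m \<and>
           real E / real V = 1 + 1 / (real m - 1 + real b / real a)"
proof (intro exI conjI)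
  define a b where "a = E - V" and "b = m * V - (m - 1) * E"
  show "0 < a" "0 < b" "b \<le> m"
    using assms by (simp_all add: a_def b_def)
  have "1 \<le> m"
    using assms(2) by (cases m) simp_all
  have a: "real a = real E - real V"
    using assms(1) by (simp add: a_def)
  have b: "real b = real m * real V - (real m - 1) * real E"
    using assms(2) \<open>1 \<le> m\<close> by (simp add: b_def of_nat_diff)
  have V: "real V = (real m - 1) * real a + real b"
    unfolding a b by (simp add: algebra_simps)
  have "0 < V"
    using assms(2) by (cases V) simp_all
  have "real m - 1 + real b / real a = real V / real a"
    using \<open>0 < a\<close> unfolding V by (simp add: field_simps)
  then have "1 + 1 / (real m - 1 + real b / real a) = (real V + real a) / real V"
    using \<open>0 < V\<close> by (simp add: field_simps)
  also have "\<dots> = real E / real V"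
    using a by simp
  finally show "real E / real V = 1 + 1 / (real m - 1 + real b / real a)"
    by simp
qed

text \<open>With c = m - 1: a denser graph with fewer vertices has deficiency m v - (m - 1) e at most m
  if the sparser one does.\<close>
lemma deficiency_bound_denser:
  fixes c V E V' E' :: real
  assumes "0 \<le> c" "0 \<le> V" "V \<le> V'" "0 < V'" "E' * V \<le> E * V'"
    and "(c + 1) * V' - c * E' \<le> c + 1"
  shows "(c + 1) * V - c * E \<le> c + 1"
proof -
  have "V' * ((c + 1) * V - c * E) = V * (c + 1) * V' - c * (E * V')"
    by (simp add: algebra_simps)
  also have "\<dots> \<le> V * (c + 1) * V' - c * (E' * V)"
    using assms(1,5) by (simp add: mult_left_mono)
  also have "\<dots> = V * ((c + 1) * V' - c * E')"
    by (simp add: algebra_simps)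
  also have "\<dots> \<le> V * (c + 1)"
    using assms(2,6) by (simp add: mult_left_mono)
  also have "\<dots> \<le> V' * (c + 1)"
    using assms(1,3) by (simp add: mult_right_mono)
  finally show ?thesis
    using assms(4) by (simp add: mult_le_cancel_left_pos)
qed

lemma rho_max_eq_form:
  assumes G: "is_graph G" and sparse: "card (verts G) < card (edges G)"
    and deficiency: "m * card (verts G) \<le> (m - 1) * card (edges G) + m"
    and bound: "rho_max G < real m / real (m - 1)"
  shows "\<exists>a b :: nat. 0 < a \<and> 0 < b \<and> b \<le> m \<and>
           rho_max G = 1 + 1 / (real m - 1 + real b / real a)"
proof -
  obtain F where F: "subgraph F G" "density F = rho_max G"
    using densest_subgraph_exists[OF G] by blast
  define V E V' E' where "V = card (verts F)" and "E = card (edges F)"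
    and "V' = card (verts G)" and "E' = card (edges G)"
  have "V \<le> V'"
    using F(1) G by (simp add: V_def V'_def subgraph_def is_graph_def card_mono)
  have "verts G \<noteq> {}"
    using G sparse by (auto simp: is_graph_def)
  then have "0 < V'"
    using G by (simp add: V'_def is_graph_def card_gt_0_iff)
  have "1 < density G"
    using sparse \<open>0 < V'\<close> by (simp add: density_def V'_def)
  also have "density G \<le> density F"
    using density_le_rho_max[OF G subgraph_refl[OF G]] F(2) by simp
  finally have dense: "1 < real E / real V"
    by (simp add: density_def E_def V_def)
  have "0 < V"
    using dense by (cases "V = 0") auto
  with dense have "V < E"
    by (simp add: less_divide_eq)
  have "0 < real m / real (m - 1)"
    using dense bound F(2) by (simp add: density_def E_def V_def)
  then have "0 < m - 1"
    by (simp add: zero_less_divide_iff)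
  have "real E / real V < real m / real (m - 1)"
    using bound F(2) by (simp add: density_def E_def V_def)
  then have "real ((m - 1) * E) < real (m * V)"
    using \<open>0 < V\<close> \<open>0 < m - 1\<close> by (simp add: divide_less_eq less_divide_eq of_nat_diff algebra_simps)
  then have "(m - 1) * E < m * V"
    by (simp only: of_nat_less_iff)
  have "real E' * real V \<le> real E * real V'"
    using \<open>density G \<le> density F\<close> \<open>0 < V\<close> \<open>0 < V'\<close>
    by (simp add: density_def E_def V_def E'_def V'_def divide_le_eq le_divide_eq)
  moreover have m: "real m = real (m - 1) + 1"
    using \<open>0 < m - 1\<close> by (simp add: of_nat_diff)
  moreover have "real (m * V') \<le> real ((m - 1) * E' + m)"
    using deficiency by (simp only: V'_def E'_def of_nat_le_iff)
  then have "real m * real V' - real (m - 1) * real E' \<le> real m"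
    by simp
  ultimately have "real m * real V - real (m - 1) * real E \<le> real m"
    using deficiency_bound_denser[of "real (m - 1)" "real V" "real V'" "real E'" "real E"]
      \<open>V \<le> V'\<close> \<open>0 < V'\<close> unfolding m by linarith
  then have "m * V \<le> (m - 1) * E + m"
    by (simp flip: of_nat_mult of_nat_add)
  then show ?thesis
    using density_eq_form[OF \<open>V < E\<close> \<open>(m - 1) * E < m * V\<close>] F(2)
    by (simp add: density_def V_def E_def)
qed

lemma m_decomposition_step_bounds:
  assumes D: "m_decomposition m Gs t G"
  shows "i \<le> t \<Longrightarrow> is_graph (Gs i) \<and> step_bounds m i (Gs i)"
proof (induction i)
  case 0
  then show ?case
    using D step_bounds_single_vertex
    by (auto simp: m_decomposition_def one_vertex_graph_def is_graph_def verts_def edges_def)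
next
  case (Suc i)
  then have IH: "is_graph (Gs i)" "step_bounds m i (Gs i)"
    by simp_all
  have "ext1 m (Gs i) (Gs (Suc i)) \<or> ext2 m (Gs i) (Gs (Suc i))"
    using D Suc.prems by (simp add: m_decomposition_def)
  then have "grows_by_step m (Gs i) (Gs (Suc i))"
    using IH(1) ext1_grows_by_step ext2_grows_by_step by blast
  then show ?case
    using IH(2) step_bounds_grows_by_step by (simp add: grows_by_step_def)
qed

lemma m_decomposition_final_bounds:
  assumes D: "m_decomposition m Gs t G" and long: "(t = 1 \<and> Gs t \<noteq> G) \<or> t \<ge> 2"
  shows "is_graph G \<and> rho_max G < real m / real (m - 1) \<and> (\<exists>k \<ge> 2. step_bounds m k G)"
proof -
  have Gs_t: "is_graph (Gs t)" "step_bounds m t (Gs t)"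
    using m_decomposition_step_bounds[OF D] by simp_all
  from D consider "G = Gs t" | "ext3 m (Gs t) G"
    by (auto simp: m_decomposition_def)
  then show ?thesis
  proof cases
    case 1
    with long obtain j where j: "t = Suc j" "2 \<le> t"
      using not0_implies_Suc by fastforce
    then have "ext1 m (Gs j) G \<or> ext2 m (Gs j) G"
      using D 1 by (simp add: m_decomposition_def)
    then show ?thesis
      using 1 Gs_t j(2) by (auto simp: ext1_def ext2_def)
  next
    case 2
    have "step_bounds m (Suc t) G"
      using step_bounds_grows_by_step[OF ext3_grows_by_step[OF 2 Gs_t(1)] Gs_t(2)] .
    moreover have "2 \<le> Suc t"
      using long by auto
    moreover have "is_graph G \<and> rho_max G < real m / real (m - 1)"
      using 2 unfolding ext3_def by blast
    ultimately show ?thesis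
      by blast
  qed
qed

theorem lemma1:
  fixes m :: nat
  assumes "m \<ge> 3"
  shows "(\<forall>G Gs t. Hm m G \<longrightarrow> m_decomposition m Gs t G \<longrightarrow>
            ((t = 1 \<and> Gs t \<noteq> G) \<or> t \<ge> 2) \<longrightarrow>
            (\<exists>a b :: nat. a > 0 \<and> b > 0 \<and> b \<le> m \<and>
               rho_max G = 1 + 1 / (real m - 1 + real b / real a)))
       \<and> (\<forall>\<rho> :: real. 1 < \<rho> \<and> \<rho> < real m / (real m - 1) \<longrightarrow>
            (\<exists>\<eta> :: nat. \<forall>v :: nat. v > \<eta> \<longrightarrow>
               (\<forall>G. Hm m G \<and> card (verts G) = v \<longrightarrow>
                  (\<exists>H. subgraph H G \<and> card (verts H) \<le> \<eta> \<and> density H > \<rho>))))"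
proof (intro conjI allI impI)
  fix G Gs t
  assume "m_decomposition m Gs t G" "(t = 1 \<and> Gs t \<noteq> G) \<or> t \<ge> 2"
  then obtain k where G: "is_graph G" "rho_max G < real m / real (m - 1)"
    and "2 \<le> k" "step_bounds m k G"
    using m_decomposition_final_bounds by blast
  then have "card (verts G) < card (edges G)" "m * card (verts G) \<le> (m - 1) * card (edges G) + m"
    using step_bounds_excess assms by simp_all
  then show "\<exists>a b :: nat. a > 0 \<and> b > 0 \<and> b \<le> m \<and>
               rho_max G = 1 + 1 / (real m - 1 + real b / real a)"
    using rho_max_eq_form G by blast
next
  fix \<rho> :: real
  assume "1 < \<rho> \<and> \<rho> < real m / (real m - 1)"
  then show "\<exists>\<eta> :: nat. \<forall>v :: nat. v > \<eta> \<longrightarrow>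
               (\<forall>G. Hm m G \<and> card (verts G) = v \<longrightarrow>
                  (\<exists>H. subgraph H G \<and> card (verts H) \<le> \<eta> \<and> density H > \<rho>))"
    using Hm_large_has_small_dense_subgraph[of \<rho> m] by auto
qed

end
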